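(* Let $(x,y,z,v)(t)$ be a normal extremal ($M=1$) starting at the identity with $\varphi_4\neq0$, and suppose $\theta(t)$ is constant on a non-degenerate interval $J\subset\mathbb R$. Let $t_0$ be the point of $\overline J$ closest to $0$ and $y_0=y(t_0)$, $z_0=z(t_0)$, $v_0=v(t_0)$. Then for $t\in J$: $$x(t)\equiv-\frac{\varphi_3}{\varphi_4},\quad y(t)=y_0+\frac{2\varphi_4(t-t_0)}{2\varphi_2\varphi_4-\varphi_3^2},\quad z(t)=z_0+\frac{\varphi_3(t-t_0)}{\varphi_3^2-2\varphi_2\varphi_4},\quad v(t)=v_0+\frac{\varphi_3^2(t-t_0)}{6\varphi_4(2\varphi_2\varphi_4-\varphi_3^2)},$$ where $v_0$ is determined from $x_0=-\varphi_3/\varphi_4$, $y_0$, $z_0$ by $\varphi_1x_0+\varphi_2y_0+(2\varphi_3+\tfrac12\varphi_4x_0)z_0+3\varphi_4v_0=t_0$. In particular, if $\varphi_3=0$ then on $J$: $x\equiv0$, $y(t)=y_0+(t-t_0)/\varphi_2$, $z\equiv z_0$, $v\equiv v_0=(t_0-\varphi_2y_0)/(3\varphi_4)$.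
   Context: Let $\mathfrak g$ be the Engel algebra with basis $X,Y,Z,V$, $[X,Y]=Z$, $[X,Z]=V$, all other brackets of basis elements zero; $G$ the corresponding connected simply connected Lie group, with coordinates of the first kind $(x,y,z,v)$ (identity $=0$). Let $F$ be an arbitrary norm on $\mathbb R^2$, $U=\{u:F(u)\le1\}$, $(u_1,u_2)\leftrightarrow u_1X(e)+u_2Y(e)$. The control system is $\dot x=u_1,\ \dot y=u_2,\ \dot z=\tfrac12(xu_2-yu_1),\ \dot v=-\tfrac12(z+\tfrac16xy)u_1+\tfrac1{12}x^2u_2$, measurable $u(t)\in U$, $x(0)=y(0)=z(0)=v(0)=0$. An extremal is a trajectory with control $u(t)$ for which there is a nowhere vanishing absolutely continuous $\psi=(\psi_1,\dots,\psi_4)$ with a.e. $\dot\psi_1=\tfrac1{12}\psi_4yu_1-(\tfrac12\psi_3+\tfrac16\psi_4x)u_2$, $\dot\psi_2=(\tfrac12\psi_3+\tfrac1{12}\psi_4x)u_1$, $\dot\psi_3=\tfrac12\psi_4u_1$, $\dot\psi_4=0$ and $h_1u_1(t)+h_2u_2(t)=\max_{u\in U}(h_1u_1+h_2u_2)=M$ a.e., with $h_1=\psi_1-\tfrac12\psi_3y-\tfrac1{12}\psi_4xy-\tfrac12\psi_4z$, $h_2=\psi_2+\tfrac12\psi_3x+\tfrac1{12}\psi_4x^2$, $M\ge0$ constant; normal means $M>0$, normalized to $M=1$. $\varphi_i=\psi_i(0)$. $F_U(h)=\max_{u\in U}h\cdot u$, $U^*=\{h:F_U(h)\le1\}$; $r(\theta)>0$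 with $F_U(r(\theta)\cos\theta,r(\theta)\sin\theta)=1$ is the polar equation of $\partial U^*$. For $M=1$, $\theta(t)$ is a continuous function with $(h_1(t),h_2(t))=r(\theta(t))(\cos\theta(t),\sin\theta(t))$. *)

theory Defs
  imports "HOL-Analysis.Analysis"
begin

definition is_norm2 :: "(real \<times> real \<Rightarrow> real) \<Rightarrow> bool" where
  "is_norm2 F \<longleftrightarrow>
     (\<forall>a. F a \<ge> 0) \<and> (\<forall>a. F a = 0 \<longleftrightarrow> a = 0) \<and>
     (\<forall>c a. F (c *\<^sub>R a) = \<bar>c\<bar> * F a) \<and> (\<forall>a b. F (a + b) \<le> F a + F b)"

definition FU :: "(real \<times> real \<Rightarrow> real) \<Rightarrow> real \<times> real \<Rightarrow> real" where
  "FU F h = (SUP u\<in>{u. F u \<le> 1}. fst h * fst u + snd h * snd u)"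

text \<open>Polar equation \<open>r(\<theta>)\<close> of the boundary of \<open>U^*\<close>.\<close>
definition polar_r :: "(real \<times> real \<Rightarrow> real) \<Rightarrow> real \<Rightarrow> real" where
  "polar_r F \<theta> = (THE r. r > 0 \<and> FU F (r * cos \<theta>, r * sin \<theta>) = 1)"

text \<open>Absolutely continuous function on the interval \<open>I \<ni> 0\<close> with a.e. derivative \<open>g\<close>,
  written in integral form: \<open>f t = f 0 + \<integral>_0^t g\<close> (oriented) for all \<open>t \<in> I\<close>.\<close>
definition int_sol :: "real set \<Rightarrow> (real \<Rightarrow> real) \<Rightarrow> (real \<Rightarrow> real) \<Rightarrow> bool" where
  "int_sol I f g \<longleftrightarrow>
     (\<forall>t\<in>I. interval_lebesgue_integrable lborel (ereal 0) (ereal t) g \<and>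
             f t = f 0 + (LBINT s=ereal 0..ereal t. g s))"

definition h1 :: "(real \<Rightarrow> real) \<Rightarrow> (real \<Rightarrow> real) \<Rightarrow> (real \<Rightarrow> real) \<Rightarrow> (real \<Rightarrow> real)
   \<Rightarrow> (real \<Rightarrow> real) \<Rightarrow> (real \<Rightarrow> real) \<Rightarrow> real \<Rightarrow> real" where
  "h1 x y z p1 p3 p4 t = p1 t - 1/2 * p3 t * y t - 1/12 * p4 t * x t * y t - 1/2 * p4 t * z t"

definition h2 :: "(real \<Rightarrow> real) \<Rightarrow> (real \<Rightarrow> real) \<Rightarrow> (real \<Rightarrow> real)
   \<Rightarrow> (real \<Rightarrow> real) \<Rightarrow> real \<Rightarrow> real" where
  "h2 x p2 p3 p4 t = p2 t + 1/2 * p3 t * x t + 1/12 * p4 t * (x t)\<^sup>2"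

text \<open>Normal extremal (\<open>M = 1\<close>) on the time interval \<open>I\<close> (containing 0), with control \<open>u\<close>,
  trajectory \<open>(x,y,z,v)\<close> starting at the identity, and adjoint \<open>\<psi> = (p1,p2,p3,p4)\<close>.\<close>
definition normal_extremal ::
  "(real \<times> real \<Rightarrow> real) \<Rightarrow> real set \<Rightarrow> (real \<Rightarrow> real \<times> real)
   \<Rightarrow> (real \<Rightarrow> real) \<Rightarrow> (real \<Rightarrow> real) \<Rightarrow> (real \<Rightarrow> real) \<Rightarrow> (real \<Rightarrow> real)
   \<Rightarrow> (real \<Rightarrow> real) \<Rightarrow> (real \<Rightarrow> real) \<Rightarrow> (real \<Rightarrow> real) \<Rightarrow> (real \<Rightarrow> real) \<Rightarrow> bool" where
  "normal_extremal F I u x y z v p1 p2 p3 p4 \<longleftrightarrow>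
     is_interval I \<and> 0 \<in> I \<and>
     u \<in> borel_measurable lborel \<and> (\<forall>t\<in>I. F (u t) \<le> 1) \<and>
     x 0 = 0 \<and> y 0 = 0 \<and> z 0 = 0 \<and> v 0 = 0 \<and>
     int_sol I x (\<lambda>t. fst (u t)) \<and>
     int_sol I y (\<lambda>t. snd (u t)) \<and>
     int_sol I z (\<lambda>t. 1/2 * (x t * snd (u t) - y t * fst (u t))) \<and>
     int_sol I v (\<lambda>t. - 1/2 * (z t + 1/6 * x t * y t) * fst (u t) + 1/12 * (x t)\<^sup>2 * snd (u t)) \<and>
     int_sol I p1 (\<lambda>t. 1/12 * p4 t * y t * fst (u t) - (1/2 * p3 t + 1/6 * p4 t * x t) * snd (u t)) \<and>
     int_sol I p2 (\<lambda>t. (1/2 * p3 t + 1/12 * p4 t * x t) * fst (u t)) \<and>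
     int_sol I p3 (\<lambda>t. 1/2 * p4 t * fst (u t)) \<and>
     int_sol I p4 (\<lambda>t. 0) \<and>
     (\<forall>t\<in>I. (p1 t, p2 t, p3 t, p4 t) \<noteq> (0, 0, 0, 0)) \<and>
     (AE t in lborel. t \<in> I \<longrightarrow>
        h1 x y z p1 p3 p4 t * fst (u t) + h2 x p2 p3 p4 t * snd (u t) = 1 \<and>
        FU F (h1 x y z p1 p3 p4 t, h2 x p2 p3 p4 t) = 1)"

end

theory Submission
  imports Defs
begin

(* Along a normal extremal the adjoint vector is a polynomial in the trajectory: p4 is constant,
   p3 = \<phi>3 + \<phi>4 x/2, and similarly for p2, p1. Hence h2 = \<phi>2 + \<phi>3 x + \<phi>4 x\<^sup>2/2 and h1 is
   affine in y and z. If \<theta>, and with it (h1, h2), is constant on J, the quadratic h2 forces the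
   continuous function x to be constant, and the constancy of h1 pins this constant down to
   -\<phi>3/\<phi>4. The Hamiltonian h1 u1 + h2 u2 = 1 then reads h2 y' = 1, and z, v follow because
   z - X y/2 and v - X\<^sup>2 y/12 have zero derivative while x = X. The relation determining v0 is the
   first integral of the dilations of the Engel group, evaluated at t0. Derivatives exist only
   almost everywhere, so the calculus is done with Lebesgue primitives, the product rule coming
   from Fubini's theorem; everything passes from J to the endpoint t0 by continuity. *)

section \<open>Real intervals\<close>

lemma is_interval_Icc_subset:
  fixes I :: "real set"
  shows "is_interval I \<Longrightarrow> a \<in> I \<Longrightarrow> b \<in> I \<Longrightarrow> {a..b} \<subseteq> I"
  by (meson atLeastAtMost_iff mem_is_interval_1_I subsetI)

lemma is_interval_insert_closure:
  fixes J :: "real set"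
  assumes "is_interval J" "t0 \<in> closure J"
  shows "is_interval (insert t0 J)"
  using assms connected_intermediate_closure[of J "insert t0 J"] closure_subset
  by (auto simp: is_interval_connected_1)

lemma closest_closure_point_mem_interval:
  fixes I J :: "real set"
  assumes I: "is_interval I" "0 \<in> I" and J: "J \<subseteq> I" "is_interval J"
    and t0: "t0 \<in> closure J" and closest: "\<forall>s\<in>closure J. \<bar>t0\<bar> \<le> \<bar>s\<bar>"
  shows "t0 \<in> I"
proof -
  obtain t where t: "t \<in> J"
    using t0 by (cases "J = {}") auto
  have t0_t: "\<bar>t0\<bar> \<le> \<bar>t\<bar>"
    using closest t closure_subset by blast
  have "{min t0 t..max t0 t} \<subseteq> insert t0 J"
    using is_interval_Icc_subset[OF is_interval_insert_closure[OF J(2) t0]] t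
    by (cases "t0 \<le> t") (auto simp: min_def max_def)
  moreover have "0 \<in> J \<Longrightarrow> t0 = 0"
    using closest closure_subset by fastforce
  ultimately have "0 \<notin> {min t0 t..max t0 t} - {t0}"
    by blast
  then have "(0 \<le> t0 \<and> t0 \<le> t) \<or> (t \<le> t0 \<and> t0 \<le> 0)"
    using t0_t by (auto simp: min_def max_def split: if_splits)
  then show ?thesis
    using mem_is_interval_1_I[OF I(1) I(2), where b=t0 and c=t]
      mem_is_interval_1_I[OF I(1) _ I(2), where a=t and b=t0] J(1) t
    by auto
qed

lemma continuous_on_Icc_constant_from_Ioo:
  fixes g :: "real \<Rightarrow> real"
  assumes "continuous_on {a..b} g" "a < b" "\<And>r. r \<in> {a<..<b} \<Longrightarrow> g r = c" "x \<in> {a..b}"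
  shows "g x = c"
proof (rule continuous_constant_on_closure[where S="{a<..<b}" and f=g and x=x and a=c])
  show "continuous_on (closure {a<..<b}) g"
    using assms by simp
  show "x \<in> closure {a<..<b}"
    using assms by simp
qed (use assms in auto)

lemma continuous_constant_at_closure_point:
  fixes J :: "real set" and g :: "real \<Rightarrow> real"
  assumes J: "is_interval J" "t0 \<in> closure J" and t1: "t1 \<in> J" "t1 \<noteq> t0"
    and cont: "continuous_on {min t0 t1..max t0 t1} g" and const: "\<And>t. t \<in> J \<Longrightarrow> g t = c"
  shows "g t0 = c"
proof (rule continuous_on_Icc_constant_from_Ioo[OF cont])
  have sub: "{min t0 t1..max t0 t1} \<subseteq> insert t0 J"
    using is_interval_Icc_subset[OF is_interval_insert_closure[OF J]] t1
    by (cases "t0 \<le> t1") (auto simp: min_def max_def)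
  show "g r = c" if r: "r \<in> {min t0 t1<..<max t0 t1}" for r
  proof -
    have "r \<in> {min t0 t1..max t0 t1}" "r \<noteq> t0"
      using r by auto
    then have "r \<in> J"
      using sub by blast
    then show ?thesis
      using const by auto
  qed
qed (use t1 in auto)

lemma quadratic_eq_imp_sum_roots:
  fixes \<alpha> \<beta> w1 w2 :: real
  assumes "w1 \<noteq> w2" "\<alpha> * w1\<^sup>2 + \<beta> * w1 = \<alpha> * w2\<^sup>2 + \<beta> * w2"
  shows "\<alpha> * (w1 + w2) + \<beta> = 0"
proof -
  have "(w1 - w2) * (\<alpha> * (w1 + w2) + \<beta>) = 0"
    using assms(2) by (simp add: algebra_simps power2_eq_square)
  then show ?thesis
    using assms(1) by simp
qed

lemma continuous_on_quadratic_level_set_const: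
  fixes g :: "real \<Rightarrow> real"
  assumes cont: "continuous_on {s..t} g" and "s \<le> t" and "\<alpha> \<noteq> 0"
    and level: "\<And>r. r \<in> {s..t} \<Longrightarrow> \<alpha> * (g r)\<^sup>2 + \<beta> * g r = \<gamma>"
  shows "g s = g t"
proof (rule ccontr)
  assume ne: "g s \<noteq> g t"
  define m where "m = (g s + g t) / 2"
  obtain r where r: "r \<in> {s..t}" "g r = m"
  proof (cases "g s \<le> g t")
    case True
    then show ?thesis
      using IVT'[of g s m t] cont \<open>s \<le> t\<close> that unfolding m_def by auto
  next
    case False
    then show ?thesis
      using IVT2'[of g t m s] cont \<open>s \<le> t\<close> that unfolding m_def by auto
  qed
  have "s \<in> {s..t}" "t \<in> {s..t}"
    using \<open>s \<le> t\<close> by auto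
  then have "\<alpha> * (g s)\<^sup>2 + \<beta> * g s = \<alpha> * (g t)\<^sup>2 + \<beta> * g t"
    and "\<alpha> * (g s)\<^sup>2 + \<beta> * g s = \<alpha> * (g r)\<^sup>2 + \<beta> * g r"
    using level r(1) by metis+
  moreover have "g s \<noteq> g r"
    using ne r(2) unfolding m_def by auto
  ultimately have "\<alpha> * (g s + g t) + \<beta> = 0" and "\<alpha> * (g s + g r) + \<beta> = 0"
    using ne quadratic_eq_imp_sum_roots by blast+
  then have "\<alpha> * g t = \<alpha> * g r"
    by (smt (verit) distrib_left)
  then show False
    using \<open>\<alpha> \<noteq> 0\<close> ne r(2) unfolding m_def by simp
qed

section \<open>Primitives in the sense of Lebesgue\<close>

(* f is absolutely continuous on the interval I with derivative g almost everywhere; unlike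
   int_sol, no base point is singled out. *)
definition primitive_on :: "real set \<Rightarrow> (real \<Rightarrow> real) \<Rightarrow> (real \<Rightarrow> real) \<Rightarrow> bool" where
  "primitive_on I f g \<longleftrightarrow> (\<forall>a\<in>I. \<forall>b\<in>I. a \<le> b \<longrightarrow>
      set_integrable lborel {a..b} g \<and> f b - f a = (LBINT s:{a..b}. g s))"

lemma primitive_onD:
  assumes "primitive_on I f g" "a \<in> I" "b \<in> I" "a \<le> b"
  shows "set_integrable lborel {a..b} g" "f b - f a = (LBINT s:{a..b}. g s)"
  using assms unfolding primitive_on_def by blast+

lemma interval_lebesgue_integrable_iff_set_integrable_Icc:
  fixes a b :: real and g :: "real \<Rightarrow> real"
  assumes "a \<le> b"
  shows "interval_lebesgue_integrable lborel (ereal a) (ereal b) g \<longleftrightarrow> set_integrable lborel {a..b} g"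
  using assms unfolding interval_lebesgue_integrable_def
  by (simp, intro set_integrable_discrete_difference[where X="{a, b}"]) auto

lemma interval_lebesgue_integrable_imp_set_integrable_min_max:
  fixes a b :: real and g :: "real \<Rightarrow> real"
  assumes "interval_lebesgue_integrable lborel (ereal a) (ereal b) g"
  shows "set_integrable lborel {min a b..max a b} g"
proof (cases "a \<le> b")
  case True
  then show ?thesis
    using assms interval_lebesgue_integrable_iff_set_integrable_Icc[of a b g] by (simp add: max_def min_def)
next
  case False
  then show ?thesis
    using interval_integrable_endpoints_reverse[THEN iffD1, OF assms]
      interval_lebesgue_integrable_iff_set_integrable_Icc[of b a g] by (simp add: max_def min_def)
qed

lemma int_sol_imp_primitive_on:
  assumes "int_sol I f g"
  shows "primitive_on I f g"
  unfolding primitive_on_def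
proof (intro ballI impI)
  fix a b assume ab: "a \<in> I" "b \<in> I" "a \<le> b"
  have ia: "interval_lebesgue_integrable lborel (ereal 0) (ereal a) g"
    and fa: "f a = f 0 + (LBINT s=ereal 0..ereal a. g s)"
    and ib: "interval_lebesgue_integrable lborel (ereal 0) (ereal b) g"
    and fb: "f b = f 0 + (LBINT s=ereal 0..ereal b. g s)"
    using assms ab unfolding int_sol_def by blast+
  have "{min 0 a..max 0 a} \<union> {min 0 b..max 0 b} = {min 0 a..max 0 b}"
    using ab by auto
  then have int_hull: "set_integrable lborel {min 0 a..max 0 b} g"
    using set_integrable_Un[OF interval_lebesgue_integrable_imp_set_integrable_min_max[OF ia]
        interval_lebesgue_integrable_imp_set_integrable_min_max[OF ib]]
    by simp
  then have "set_integrable lborel {a..b} g"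
    by (rule set_integrable_subset) auto
  have "interval_lebesgue_integrable lborel (ereal (min 0 a)) (ereal (max 0 b)) g"
    using int_hull interval_lebesgue_integrable_iff_set_integrable_Icc by (simp del: ereal_min ereal_max)
  moreover have "ereal (min 0 a) = min (ereal 0) (min (ereal a) (ereal b))"
    and "ereal (max 0 b) = max (ereal 0) (max (ereal a) (ereal b))"
    using ab by (auto simp: min_def max_def)
  ultimately have "(LBINT s=ereal 0..ereal a. g s) + (LBINT s=ereal a..ereal b. g s)
      = (LBINT s=ereal 0..ereal b. g s)"
    by (intro interval_integral_sum) simp
  moreover have "(LBINT s=ereal a..ereal b. g s) = (LBINT s:{a..b}. g s)"
    using ab by (simp add: interval_integral_Icc)
  ultimately show "set_integrable lborel {a..b} g \<and> f b - f a = (LBINT s:{a..b}. g s)"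
    using fa fb \<open>set_integrable lborel {a..b} g\<close> by simp
qed

lemma primitive_on_subset: "primitive_on I f g \<Longrightarrow> K \<subseteq> I \<Longrightarrow> primitive_on K f g"
  unfolding primitive_on_def by blast

lemma primitive_on_const: "primitive_on I (\<lambda>t. k) (\<lambda>t. 0)"
  unfolding primitive_on_def by (simp add: set_integrable_def)

lemma primitive_on_add:
  assumes "primitive_on I f a" "primitive_on I g b"
  shows "primitive_on I (\<lambda>t. f t + g t) (\<lambda>t. a t + b t)"
  unfolding primitive_on_def
proof (intro ballI impI)
  fix c d assume cd: "c \<in> I" "d \<in> I" "c \<le> d"
  have a: "set_integrable lborel {c..d} a" "f d - f c = (LBINT s:{c..d}. a s)"
    and b: "set_integrable lborel {c..d} b" "g d - g c = (LBINT s:{c..d}. b s)"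
    using primitive_onD[OF assms(1) cd] primitive_onD[OF assms(2) cd] by blast+
  show "set_integrable lborel {c..d} (\<lambda>t. a t + b t) \<and>
      f d + g d - (f c + g c) = (LBINT s:{c..d}. a s + b s)"
    using set_integral_add[OF a(1) b(1)] a(2) b(2) by simp
qed

lemma primitive_on_cmult:
  assumes "primitive_on I f a"
  shows "primitive_on I (\<lambda>t. k * f t) (\<lambda>t. k * a t)"
  unfolding primitive_on_def
proof (intro ballI impI)
  fix c d assume cd: "c \<in> I" "d \<in> I" "c \<le> d"
  have h: "set_integrable lborel {c..d} a" "f d - f c = (LBINT s:{c..d}. a s)"
    using primitive_onD[OF assms cd] by blast+
  show "set_integrable lborel {c..d} (\<lambda>t. k * a t) \<and> k * f d - k * f c = (LBINT s:{c..d}. k * a s)"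
    using h by (simp add: right_diff_distrib[symmetric])
qed

lemma primitive_on_cong:
  assumes I: "is_interval I" and "primitive_on I f a"
    and "\<And>t. t \<in> I \<Longrightarrow> f t = g t" "\<And>t. t \<in> I \<Longrightarrow> a t = b t"
  shows "primitive_on I g b"
  unfolding primitive_on_def
proof (intro ballI impI)
  fix c d assume cd: "c \<in> I" "d \<in> I" "c \<le> d"
  have sub: "{c..d} \<subseteq> I"
    using is_interval_Icc_subset[OF I cd(1,2)] .
  have "set_integrable lborel {c..d} a = set_integrable lborel {c..d} b"
    by (rule set_integrable_cong) (use sub assms(4) in auto)
  moreover have "(LBINT s:{c..d}. a s) = (LBINT s:{c..d}. b s)"
    by (rule set_lebesgue_integral_cong) (use sub assms(4) in auto)
  ultimately
  show "set_integrable lborel {c..d} b \<and> g d - g c = (LBINT s:{c..d}. b s)"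
    using primitive_onD[OF assms(2) cd] assms(3) cd by simp
qed

lemma primitive_on_unique:
  assumes "primitive_on I f a" "primitive_on I g a" "s \<in> I" "t \<in> I"
  shows "f t - f s = g t - g s"
proof (cases "s \<le> t")
  case True
  then show ?thesis
    using primitive_onD(2)[OF assms(1) assms(3,4)] primitive_onD(2)[OF assms(2) assms(3,4)] by simp
next
  case False
  then show ?thesis
    using primitive_onD(2)[OF assms(1) assms(4,3)] primitive_onD(2)[OF assms(2) assms(4,3)] by simp
qed

lemma primitive_on_const_if_zero:
  assumes "is_interval I" "primitive_on I f a" "\<And>t. t \<in> I \<Longrightarrow> a t = 0" "s \<in> I" "t \<in> I"
  shows "f t = f s"
proof -
  have "primitive_on I f (\<lambda>t. 0)"
    by (rule primitive_on_cong[OF assms(1,2)]) (use assms(3) in auto)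
  from primitive_on_unique[OF this primitive_on_const assms(4,5)] show ?thesis by simp
qed

lemma primitive_on_AE_eq_one:
  assumes I: "is_interval I" and f: "primitive_on I f a"
    and one: "AE t in lborel. t \<in> I \<longrightarrow> a t = 1" and st: "s \<in> I" "t \<in> I"
  shows "f t - f s = t - s"
proof -
  have "f d - f c = d - c" if cd: "c \<in> I" "d \<in> I" "c \<le> d" for c d
  proof -
    have sub: "{c..d} \<subseteq> I"
      using is_interval_Icc_subset[OF I cd(1,2)] .
    have one_cd: "AE t in lborel. t \<in> {c..d} \<longrightarrow> a t = 1"
      using one by eventually_elim (use sub in auto)
    have "(\<lambda>s. indicator {c..d} s *\<^sub>R a s) \<in> borel_measurable lborel"
      using primitive_onD(1)[OF f cd] unfolding set_integrable_def by auto
    then have "(LBINT s:{c..d}. a s) = (LBINT s. indicator {c..d} s *\<^sub>R (1::real))"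
      unfolding set_lebesgue_integral_def
      by (rule integral_cong_AE) (use one_cd in \<open>auto split: split_indicator\<close>)
    then show ?thesis
      using primitive_onD(2)[OF f cd] cd by simp
  qed
  from this[of s t] this[of t s] st show ?thesis
    by (cases "s \<le> t") auto
qed

lemma primitive_on_continuous_on_Icc:
  assumes I: "is_interval I" and f: "primitive_on I f a" and cd: "c \<in> I" "d \<in> I"
  shows "continuous_on {c..d} f"
proof (cases "c \<le> d")
  case True
  have sub: "{c..d} \<subseteq> I"
    using is_interval_Icc_subset[OF I cd] .
  have int: "a integrable_on {c..d}"
    using primitive_onD(1)[OF f cd True] set_borel_integral_eq_integral(1) by blast
  have "f c + integral {c..t} a = f t" if "t \<in> {c..d}" for t
  proof -
    have "t \<in> I" "c \<le> t"
      using sub that by auto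
    from primitive_onD[OF f cd(1) this] show ?thesis
      using set_borel_integral_eq_integral(2) by fastforce
  qed
  moreover have "continuous_on {c..d} (\<lambda>t. f c + integral {c..t} a)"
    by (intro continuous_on_add continuous_on_const indefinite_integral_continuous_1 int)
  ultimately show ?thesis
    using continuous_on_eq by blast
qed simp

lemma integrable_lborel_pair_mult:
  fixes a b :: "real \<Rightarrow> real"
  assumes ia: "integrable lborel a" and ib: "integrable lborel b"
  shows "integrable (lborel \<Otimes>\<^sub>M lborel) (\<lambda>(r, s). a r * b s)"
proof (rule lborel_pair.Fubini_integrable)
  have "(\<lambda>r. \<integral>s. norm (a r * b s) \<partial>lborel) = (\<lambda>r. \<bar>a r\<bar> * (\<integral>s. \<bar>b s\<bar> \<partial>lborel))"
    by (simp add: abs_mult)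
  then show "integrable lborel (\<lambda>r. \<integral>s. norm (case (r, s) of (r, s) \<Rightarrow> a r * b s) \<partial>lborel)"
    using ia by simp
  show "AE r in lborel. integrable lborel (\<lambda>s. case (r, s) of (r, s) \<Rightarrow> a r * b s)"
    using ib by simp
  show "(\<lambda>(r, s). a r * b s) \<in> borel_measurable (lborel \<Otimes>\<^sub>M lborel)"
    using ia ib by measurable
qed

lemma integral_mult_indicator_Fubini:
  fixes a b :: "real \<Rightarrow> real"
  assumes ia: "integrable lborel a" and ib: "integrable lborel b"
    and S: "S \<in> sets (lborel \<Otimes>\<^sub>M lborel)"
  shows "integrable lborel (\<lambda>s. (\<integral>r. indicator S (r, s) * a r \<partial>lborel) * b s)"
    and "integrable lborel (\<lambda>r. a r * (\<integral>s. indicator S (r, s) * b s \<partial>lborel))"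
    and "(\<integral>s. (\<integral>r. indicator S (r, s) * a r \<partial>lborel) * b s \<partial>lborel)
          = (\<integral>r. a r * (\<integral>s. indicator S (r, s) * b s \<partial>lborel) \<partial>lborel)"
proof -
  define h where "h r s = indicator S (r, s) * (a r * b s)" for r s
  have [measurable]: "a \<in> borel_measurable borel" "b \<in> borel_measurable borel"
    using ia ib by auto
  have "integrable (lborel \<Otimes>\<^sub>M lborel) (\<lambda>(r, s). h r s)"
    using integrable_lborel_pair_mult[OF ia ib] unfolding h_def
    by (rule Bochner_Integration.integrable_bound) (use S in \<open>auto split: split_indicator\<close>)
  moreover have "(\<lambda>s. \<integral>r. h r s \<partial>lborel) = (\<lambda>s. (\<integral>r. indicator S (r, s) * a r \<partial>lborel) * b s)"
    by (simp add: h_def mult.assoc[symmetric])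
  moreover have "(\<lambda>r. \<integral>s. h r s \<partial>lborel) = (\<lambda>r. a r * (\<integral>s. indicator S (r, s) * b s \<partial>lborel))"
    by (simp add: h_def mult.left_commute)
  ultimately show "integrable lborel (\<lambda>s. (\<integral>r. indicator S (r, s) * a r \<partial>lborel) * b s)"
    and "integrable lborel (\<lambda>r. a r * (\<integral>s. indicator S (r, s) * b s \<partial>lborel))"
    and "(\<integral>s. (\<integral>r. indicator S (r, s) * a r \<partial>lborel) * b s \<partial>lborel)
          = (\<integral>r. a r * (\<integral>s. indicator S (r, s) * b s \<partial>lborel) \<partial>lborel)"
    using lborel_pair.integrable_snd[of h] lborel_pair.integrable_fst[of h]
      lborel_pair.integral_snd[of h] lborel_pair.integral_fst[of h] by auto
qed

lemma integral_mult_split_diagonal: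
  fixes a b :: "real \<Rightarrow> real"
  assumes ia: "integrable lborel a" and ib: "integrable lborel b"
  shows "integrable lborel (\<lambda>s. (LBINT r:{..s}. a r) * b s)"
    and "integrable lborel (\<lambda>r. a r * (LBINT s:{..<r}. b s))"
    and "(LBINT r. a r) * (LBINT s. b s)
          = (LBINT s. (LBINT r:{..s}. a r) * b s) + (LBINT r. a r * (LBINT s:{..<r}. b s))"
proof -
  define S :: "(real \<times> real) set" where "S = {p. snd p < fst p}"
  have "S \<in> sets (lborel \<Otimes>\<^sub>M lborel)"
    unfolding lborel_prod S_def by (simp add: borel_open open_Collect_less continuous_on_fst continuous_on_snd)
  note Fubini = integral_mult_indicator_Fubini[OF ia ib this]
  have "(LBINT r:{..s}. a r) = (LBINT r. a r) - (\<integral>r. indicator S (r, s) * a r \<partial>lborel)" for s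
  proof -
    have "(\<lambda>r. indicator S (r, s) * a r) = (\<lambda>r. a r - indicator {..s} r * a r)"
      by (auto simp: S_def fun_eq_iff split: split_indicator)
    then show ?thesis
      using ia integrable_mult_indicator[OF _ ia, of "{..s}"] by (simp add: set_lebesgue_integral_def)
  qed
  then have lower: "(\<lambda>s. (LBINT r:{..s}. a r) * b s)
      = (\<lambda>s. (LBINT r. a r) * b s - (\<integral>r. indicator S (r, s) * a r \<partial>lborel) * b s)"
    by (simp add: left_diff_distrib)
  have upper: "(\<integral>s. indicator S (r, s) * b s \<partial>lborel) = (LBINT s:{..<r}. b s)" for r
    unfolding set_lebesgue_integral_def
    by (rule Bochner_Integration.integral_cong) (auto simp: S_def split: split_indicator)
  show "integrable lborel (\<lambda>s. (LBINT r:{..s}. a r) * b s)"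
    unfolding lower using ib Fubini(1) by simp
  show "integrable lborel (\<lambda>r. a r * (LBINT s:{..<r}. b s))"
    using Fubini(2) unfolding upper .
  show "(LBINT r. a r) * (LBINT s. b s)
      = (LBINT s. (LBINT r:{..s}. a r) * b s) + (LBINT r. a r * (LBINT s:{..<r}. b s))"
    unfolding lower using ib Fubini(1,3) by (simp add: upper)
qed

lemma set_integral_mult_split_diagonal:
  fixes a b :: "real \<Rightarrow> real"
  assumes ia: "set_integrable lborel {c..d} a" and ib: "set_integrable lborel {c..d} b"
  shows "set_integrable lborel {c..d} (\<lambda>s. (LBINT r:{c..s}. a r) * b s)"
    and "set_integrable lborel {c..d} (\<lambda>s. a s * (LBINT r:{c..s}. b r))"
    and "(LBINT r:{c..d}. a r) * (LBINT s:{c..d}. b s)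
          = (LBINT s:{c..d}. (LBINT r:{c..s}. a r) * b s) + (LBINT s:{c..d}. a s * (LBINT r:{c..s}. b r))"
proof -
  define ac where "ac = (\<lambda>r. indicator {c..d} r * a r)"
  define bc where "bc = (\<lambda>r. indicator {c..d} r * b r)"
  have "integrable lborel ac" "integrable lborel bc"
    using ia ib by (simp_all add: ac_def bc_def set_integrable_def)
  note split = integral_mult_split_diagonal[OF this]
  have below: "(LBINT r:{..s}. ac r) * bc s = indicator {c..d} s * ((LBINT r:{c..s}. a r) * b s)" for s
  proof (cases "s \<in> {c..d}")
    case True
    then have "(LBINT r:{..s}. ac r) = (LBINT r:{c..s}. a r)"
      unfolding set_lebesgue_integral_def
      by (intro Bochner_Integration.integral_cong) (auto simp: ac_def split: split_indicator)
    then show ?thesis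
      using True by (simp add: bc_def)
  qed (simp add: bc_def)
  have above: "ac r * (LBINT s:{..<r}. bc s) = indicator {c..d} r * (a r * (LBINT s:{c..r}. b s))" for r
  proof (cases "r \<in> {c..d}")
    case True
    then have "(LBINT s:{..<r}. bc s) = (LBINT s:{c..<r}. b s)"
      unfolding set_lebesgue_integral_def
      by (intro Bochner_Integration.integral_cong) (auto simp: bc_def split: split_indicator)
    also have "\<dots> = (LBINT s:{c..r}. b s)"
      by (rule set_integral_discrete_difference[where X="{r}"]) auto
    finally show ?thesis
      using True by (simp add: ac_def)
  qed (simp add: ac_def)
  show "set_integrable lborel {c..d} (\<lambda>s. (LBINT r:{c..s}. a r) * b s)"
    using split(1) unfolding below set_integrable_def by simp
  show "set_integrable lborel {c..d} (\<lambda>s. a s * (LBINT r:{c..s}. b r))"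
    using split(2) unfolding above set_integrable_def by simp
  show "(LBINT r:{c..d}. a r) * (LBINT s:{c..d}. b s)
      = (LBINT s:{c..d}. (LBINT r:{c..s}. a r) * b s) + (LBINT s:{c..d}. a s * (LBINT r:{c..s}. b r))"
    using split(3) unfolding below above by (simp add: set_lebesgue_integral_def ac_def bc_def)
qed

lemma primitive_on_mult:
  assumes I: "is_interval I" and f: "primitive_on I f a" and g: "primitive_on I g b"
  shows "primitive_on I (\<lambda>t. f t * g t) (\<lambda>t. a t * g t + f t * b t)"
  unfolding primitive_on_def
proof (intro ballI impI)
  fix c d assume cd: "c \<in> I" "d \<in> I" "c \<le> d"
  have sub: "{c..d} \<subseteq> I"
    using is_interval_Icc_subset[OF I cd(1,2)] .
  have ia: "set_integrable lborel {c..d} a" and ib: "set_integrable lborel {c..d} b"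
    using primitive_onD(1)[OF f cd] primitive_onD(1)[OF g cd] .
  have fs: "(LBINT r:{c..s}. a r) = f s - f c" and gs: "(LBINT r:{c..s}. b r) = g s - g c"
    if "s \<in> {c..d}" for s
    using primitive_onD(2)[OF f cd(1), of s] primitive_onD(2)[OF g cd(1), of s] sub that by auto
  note split = set_integral_mult_split_diagonal[OF ia ib]
  have ifb: "set_integrable lborel {c..d} (\<lambda>s. (f s - f c) * b s)"
    using split(1) by (rule set_integrable_cong[THEN iffD1, rotated -1]) (auto simp: fs)
  have iag: "set_integrable lborel {c..d} (\<lambda>s. a s * (g s - g c))"
    using split(2) by (rule set_integrable_cong[THEN iffD1, rotated -1]) (auto simp: gs)
  have "(LBINT s:{c..d}. (LBINT r:{c..s}. a r) * b s) = (LBINT s:{c..d}. (f s - f c) * b s)"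
    and "(LBINT s:{c..d}. a s * (LBINT r:{c..s}. b r)) = (LBINT s:{c..d}. a s * (g s - g c))"
    by (auto intro: set_lebesgue_integral_cong simp: fs gs)
  with split(3) have parts: "(f d - f c) * (g d - g c)
      = (LBINT s:{c..d}. (f s - f c) * b s) + (LBINT s:{c..d}. a s * (g s - g c))"
    using primitive_onD(2)[OF f cd] primitive_onD(2)[OF g cd] by simp
  have decomp: "(\<lambda>s. a s * g s + f s * b s)
      = (\<lambda>s. ((f s - f c) * b s + a s * (g s - g c)) + (f c * b s + g c * a s))"
    by (auto simp: fun_eq_iff algebra_simps)
  have iconst: "set_integrable lborel {c..d} (\<lambda>s. f c * b s + g c * a s)"
    and "(LBINT s:{c..d}. f c * b s + g c * a s) = f c * (g d - g c) + g c * (f d - f c)"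
    using ia ib primitive_onD(2)[OF f cd] primitive_onD(2)[OF g cd] by simp_all
  moreover note set_integral_add[OF ifb iag]
  moreover note set_integral_add[OF set_integral_add(1)[OF ifb iag] iconst]
  ultimately show "set_integrable lborel {c..d} (\<lambda>t. a t * g t + f t * b t) \<and>
      f d * g d - f c * g c = (LBINT s:{c..d}. a s * g s + f s * b s)"
    unfolding decomp using parts by (simp add: algebra_simps)
qed

section \<open>Normal extremals on the Engel group\<close>

locale engel_normal_extremal =
  fixes F :: "real \<times> real \<Rightarrow> real" and I :: "real set" and u :: "real \<Rightarrow> real \<times> real"
    and x y z v p1 p2 p3 p4 :: "real \<Rightarrow> real"
  assumes normal_extremal: "normal_extremal F I u x y z v p1 p2 p3 p4"
begin

abbreviation "H1 \<equiv> h1 x y z p1 p3 p4"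
abbreviation "H2 \<equiv> h2 x p2 p3 p4"

lemma interval: "is_interval I" "0 \<in> I"
  using normal_extremal unfolding normal_extremal_def by blast+

lemma initial: "x 0 = 0" "y 0 = 0" "z 0 = 0" "v 0 = 0"
  using normal_extremal unfolding normal_extremal_def by blast+

lemma primitives:
  "primitive_on I x (\<lambda>t. fst (u t))"
  "primitive_on I y (\<lambda>t. snd (u t))"
  "primitive_on I z (\<lambda>t. 1/2 * (x t * snd (u t) - y t * fst (u t)))"
  "primitive_on I v (\<lambda>t. - 1/2 * (z t + 1/6 * x t * y t) * fst (u t) + 1/12 * (x t)\<^sup>2 * snd (u t))"
  "primitive_on I p1 (\<lambda>t. 1/12 * p4 t * y t * fst (u t) - (1/2 * p3 t + 1/6 * p4 t * x t) * snd (u t))"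
  "primitive_on I p2 (\<lambda>t. (1/2 * p3 t + 1/12 * p4 t * x t) * fst (u t))"
  "primitive_on I p3 (\<lambda>t. 1/2 * p4 t * fst (u t))"
  "primitive_on I p4 (\<lambda>t. 0)"
  using normal_extremal int_sol_imp_primitive_on unfolding normal_extremal_def by blast+

lemma primitive_xy: "primitive_on I (\<lambda>t. x t * y t) (\<lambda>t. fst (u t) * y t + x t * snd (u t))"
  and primitive_xz: "primitive_on I (\<lambda>t. x t * z t)
    (\<lambda>t. fst (u t) * z t + x t * (1/2 * (x t * snd (u t) - y t * fst (u t))))"
  by (intro primitive_on_mult interval primitives)+

lemma Hamiltonian_AE_eq_one: "AE t in lborel. t \<in> I \<longrightarrow> H1 t * fst (u t) + H2 t * snd (u t) = 1"
  using normal_extremal unfolding normal_extremal_def by auto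

lemma p4_eq: "t \<in> I \<Longrightarrow> p4 t = p4 0"
  using primitive_on_unique[OF primitives(8) primitive_on_const interval(2)] by simp

lemma p3_eq: "t \<in> I \<Longrightarrow> p3 t = p3 0 + 1/2 * p4 0 * x t"
proof -
  have "primitive_on I p3 (\<lambda>t. 1/2 * p4 0 * fst (u t))"
    by (rule primitive_on_cong[OF interval(1) primitives(7)]) (auto simp: p4_eq)
  moreover have "primitive_on I (\<lambda>t. 1/2 * p4 0 * x t) (\<lambda>t. 1/2 * p4 0 * fst (u t))"
    by (intro primitive_on_cmult primitives)
  ultimately show "t \<in> I \<Longrightarrow> ?thesis"
    using primitive_on_unique[OF _ _ interval(2)] initial by fastforce
qed

lemma p2_eq: "t \<in> I \<Longrightarrow> p2 t = p2 0 + 1/2 * p3 0 * x t + 1/6 * p4 0 * (x t)\<^sup>2"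
proof -
  have "primitive_on I p2 (\<lambda>t. 1/2 * p3 0 * fst (u t) + 1/6 * p4 0 * (fst (u t) * x t + x t * fst (u t)))"
    by (rule primitive_on_cong[OF interval(1) primitives(6)]) (auto simp: p4_eq p3_eq algebra_simps)
  moreover have "primitive_on I (\<lambda>t. 1/2 * p3 0 * x t + 1/6 * p4 0 * (x t * x t))
      (\<lambda>t. 1/2 * p3 0 * fst (u t) + 1/6 * p4 0 * (fst (u t) * x t + x t * fst (u t)))"
    by (intro primitive_on_add primitive_on_cmult primitive_on_mult interval primitives)
  ultimately show "t \<in> I \<Longrightarrow> ?thesis"
    using primitive_on_unique[OF _ _ interval(2)] initial by (fastforce simp: power2_eq_square)
qed

lemma p1_eq:
  "t \<in> I \<Longrightarrow> p1 t = p1 0 - 1/2 * p3 0 * y t - 1/6 * p4 0 * x t * y t - 1/2 * p4 0 * z t"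
proof -
  define d where "d t = (- 1/6 * p4 0) * (fst (u t) * y t + x t * snd (u t))
      + (- 1/2 * p4 0) * (1/2 * (x t * snd (u t) - y t * fst (u t))) + (- 1/2 * p3 0) * snd (u t)" for t
  have "primitive_on I p1 d"
    by (rule primitive_on_cong[OF interval(1) primitives(5)]) (auto simp: d_def p4_eq p3_eq algebra_simps)
  moreover have "primitive_on I (\<lambda>t. (- 1/6 * p4 0) * (x t * y t) + (- 1/2 * p4 0) * z t + (- 1/2 * p3 0) * y t) d"
    unfolding d_def by (intro primitive_on_add primitive_on_cmult primitive_xy primitives)
  ultimately show "t \<in> I \<Longrightarrow> ?thesis"
    using primitive_on_unique[OF _ _ interval(2)] initial by (fastforce simp: algebra_simps)
qed

lemma H1_eq: "t \<in> I \<Longrightarrow> H1 t = p1 0 - p3 0 * y t - 1/2 * p4 0 * x t * y t - p4 0 * z t"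
  unfolding h1_def by (simp add: p1_eq p3_eq p4_eq algebra_simps)

lemma H2_eq: "t \<in> I \<Longrightarrow> H2 t = p2 0 + p3 0 * x t + 1/2 * p4 0 * (x t)\<^sup>2"
  unfolding h2_def by (simp add: p2_eq p3_eq p4_eq algebra_simps power2_eq_square)

lemma continuous_on_Icc_H:
  assumes "a \<in> I" "b \<in> I"
  shows "continuous_on {a..b} H1" "continuous_on {a..b} H2"
proof -
  have sub: "{a..b} \<subseteq> I"
    using is_interval_Icc_subset[OF interval(1) assms] .
  have cont: "continuous_on {a..b} x" "continuous_on {a..b} y" "continuous_on {a..b} z"
    using primitive_on_continuous_on_Icc[OF interval(1) primitives(1) assms]
      primitive_on_continuous_on_Icc[OF interval(1) primitives(2) assms]
      primitive_on_continuous_on_Icc[OF interval(1) primitives(3) assms] by blast+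
  then have "continuous_on {a..b} (\<lambda>t. p1 0 - p3 0 * y t - 1/2 * p4 0 * x t * y t - p4 0 * z t)"
    and "continuous_on {a..b} (\<lambda>t. p2 0 + p3 0 * x t + 1/2 * p4 0 * (x t)\<^sup>2)"
    by (intro continuous_intros cont)+
  then show "continuous_on {a..b} H1" "continuous_on {a..b} H2"
    by (auto intro: continuous_on_eq simp: H1_eq H2_eq subsetD[OF sub])
qed

(* The left-hand side is the pairing of \<psi>(t) with the dilation field (x, y, 2z, 3v) at the point
   of the trajectory; its derivative is the Hamiltonian, which is 1 almost everywhere. *)
lemma dilation_integral:
  assumes "t \<in> I"
  shows "p1 0 * x t + p2 0 * y t + 2 * p3 0 * z t + 1/2 * p4 0 * x t * z t + 3 * p4 0 * v t = t"
proof -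
  define Q where "Q t = p1 0 * x t + p2 0 * y t + 2 * p3 0 * z t + 1/2 * p4 0 * (x t * z t) + 3 * p4 0 * v t"
    for t
  have "primitive_on I Q (\<lambda>t. p1 0 * fst (u t) + p2 0 * snd (u t)
      + 2 * p3 0 * (1/2 * (x t * snd (u t) - y t * fst (u t)))
      + 1/2 * p4 0 * (fst (u t) * z t + x t * (1/2 * (x t * snd (u t) - y t * fst (u t))))
      + 3 * p4 0 * (- 1/2 * (z t + 1/6 * x t * y t) * fst (u t) + 1/12 * (x t)\<^sup>2 * snd (u t)))"
    unfolding Q_def by (intro primitive_on_add primitive_on_cmult primitive_xz primitives)
  then have "primitive_on I Q (\<lambda>t. H1 t * fst (u t) + H2 t * snd (u t))"
    by (rule primitive_on_cong[OF interval(1)])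
       (auto simp: H1_eq H2_eq algebra_simps power2_eq_square)
  from primitive_on_AE_eq_one[OF interval(1) this Hamiltonian_AE_eq_one interval(2) assms]
  show ?thesis
    using initial by (simp add: Q_def algebra_simps)
qed

lemma x_const_if_H2_const:
  assumes "p4 0 \<noteq> 0" and K: "is_interval K" "K \<subseteq> I"
    and H2: "\<And>t. t \<in> K \<Longrightarrow> H2 t = C" and st: "s \<in> K" "t \<in> K"
  shows "x s = x t"
proof -
  have "x s = x t" if st: "s \<in> K" "t \<in> K" "s \<le> t" for s t
  proof (rule continuous_on_quadratic_level_set_const
      [where g=x and \<alpha>="1/2 * p4 0" and \<beta>="p3 0" and \<gamma>="C - p2 0"])
    show "continuous_on {s..t} x"
      using primitive_on_continuous_on_Icc[OF interval(1) primitives(1)] st K(2) by blast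
    show "1/2 * p4 0 \<noteq> 0"
      using assms(1) by simp
    show "1/2 * p4 0 * (x r)\<^sup>2 + p3 0 * x r = C - p2 0" if "r \<in> {s..t}" for r
    proof -
      have "r \<in> K"
        using is_interval_Icc_subset[OF K(1) st(1,2)] that by blast
      then show ?thesis
        using H2[of r] H2_eq[of r] K(2) by auto
    qed
  qed fact
  then show ?thesis
    using st by (metis linear)
qed

lemma y_affine_if_H_const:
  assumes K: "is_interval K" "K \<subseteq> I" and H: "\<And>t. t \<in> K \<Longrightarrow> H1 t = C1 \<and> H2 t = C2"
    and xK: "\<And>t. t \<in> K \<Longrightarrow> x t = X" and st: "s \<in> K" "t \<in> K"
  shows "C2 * (y t - y s) = t - s"
proof -
  have "primitive_on K (\<lambda>t. C1 * x t + C2 * y t) (\<lambda>t. C1 * fst (u t) + C2 * snd (u t))"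
    by (intro primitive_on_subset[OF _ K(2)] primitive_on_add primitive_on_cmult primitives)
  then have "primitive_on K (\<lambda>t. C1 * x t + C2 * y t) (\<lambda>t. H1 t * fst (u t) + H2 t * snd (u t))"
    by (rule primitive_on_cong[OF K(1)]) (auto simp: H)
  moreover have "AE t in lborel. t \<in> K \<longrightarrow> H1 t * fst (u t) + H2 t * snd (u t) = 1"
    using Hamiltonian_AE_eq_one by eventually_elim (use K(2) in auto)
  ultimately have "(C1 * x t + C2 * y t) - (C1 * x s + C2 * y s) = t - s"
    using primitive_on_AE_eq_one[OF K(1) _ _ st] by blast
  then show ?thesis
    using xK st by (simp add: algebra_simps)
qed

(* The combinations below are chosen so that their derivatives vanish where x = X. *)
lemma z_v_if_x_const:
  assumes K: "is_interval K" "K \<subseteq> I" and xK: "\<And>t. t \<in> K \<Longrightarrow> x t = X" and st: "s \<in> K" "t \<in> K"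
  shows "z t - 1/2 * X * y t = z s - 1/2 * X * y s"
    and "v t - 1/12 * X\<^sup>2 * y t = v s - 1/12 * X\<^sup>2 * y s"
proof -
  have "primitive_on K (\<lambda>t. z t + (- X) * y t + 1/2 * (x t * y t))
      (\<lambda>t. 1/2 * (x t * snd (u t) - y t * fst (u t)) + (- X) * snd (u t)
        + 1/2 * (fst (u t) * y t + x t * snd (u t)))"
    by (intro primitive_on_subset[OF _ K(2)] primitive_on_add primitive_on_cmult primitive_xy primitives)
  from primitive_on_const_if_zero[OF K(1) this _ st]
  show "z t - 1/2 * X * y t = z s - 1/2 * X * y s"
    using xK st by (simp add: algebra_simps)
  have "primitive_on K
      (\<lambda>t. v t + (- 1/6 * X\<^sup>2) * y t + 1/2 * (x t * z t) + (- 1/2 * X) * z t + (1/12 * X) * (x t * y t))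
      (\<lambda>t. (- 1/2 * (z t + 1/6 * x t * y t) * fst (u t) + 1/12 * (x t)\<^sup>2 * snd (u t))
        + (- 1/6 * X\<^sup>2) * snd (u t)
        + 1/2 * (fst (u t) * z t + x t * (1/2 * (x t * snd (u t) - y t * fst (u t))))
        + (- 1/2 * X) * (1/2 * (x t * snd (u t) - y t * fst (u t)))
        + (1/12 * X) * (fst (u t) * y t + x t * snd (u t)))"
    by (intro primitive_on_subset[OF _ K(2)] primitive_on_add primitive_on_cmult primitive_xy
        primitive_xz primitives)
  from primitive_on_const_if_zero[OF K(1) this _ st]
  show "v t - 1/12 * X\<^sup>2 * y t = v s - 1/12 * X\<^sup>2 * y s"
    using xK st by (simp add: algebra_simps power2_eq_square)
qed

lemma x_value_if_H1_const:
  assumes "p4 0 \<noteq> 0" and K: "is_interval K" "K \<subseteq> I" and H1: "\<And>t. t \<in> K \<Longrightarrow> H1 t = C"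
    and xK: "\<And>t. t \<in> K \<Longrightarrow> x t = X" and st: "s \<in> K" "t \<in> K" "y t \<noteq> y s"
  shows "X = - p3 0 / p4 0"
proof -
  have sI: "s \<in> I" and tI: "t \<in> I"
    using st(1,2) K(2) by auto
  have "z t - z s = 1/2 * X * (y t - y s)"
    using z_v_if_x_const(1)[OF K xK st(1,2)] by (simp add: algebra_simps)
  moreover have "H1 s = p1 0 - p3 0 * y s - 1/2 * p4 0 * X * y s - p4 0 * z s"
    and "H1 t = p1 0 - p3 0 * y t - 1/2 * p4 0 * X * y t - p4 0 * z t"
    using H1_eq[OF sI] H1_eq[OF tI] xK[OF st(1)] xK[OF st(2)] by simp_all
  moreover have "H1 t = H1 s"
    using H1 st by simp
  ultimately have "(p3 0 + p4 0 * X) * (y t - y s) = 0"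
    by algebra
  then have "p3 0 + p4 0 * X = 0"
    using st(3) by simp
  then have "X * p4 0 = - p3 0"
    by (simp add: algebra_simps)
  then show ?thesis
    using assms(1) by (simp add: field_simps)
qed

lemma trajectory_if_H_const:
  assumes p4: "p4 0 \<noteq> 0" and K: "is_interval K" "K \<subseteq> I"
    and H: "\<And>t. t \<in> K \<Longrightarrow> H1 t = C1 \<and> H2 t = C2"
    and t0: "t0 \<in> K" and t1: "t1 \<in> K" "t1 \<noteq> t0" and t: "t \<in> K"
  shows "x t = - p3 0 / p4 0 \<and>
    y t = y t0 + 2 * p4 0 * (t - t0) / (2 * p2 0 * p4 0 - (p3 0)\<^sup>2) \<and>
    z t = z t0 + p3 0 * (t - t0) / ((p3 0)\<^sup>2 - 2 * p2 0 * p4 0) \<and>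
    v t = v t0 + (p3 0)\<^sup>2 * (t - t0) / (6 * p4 0 * (2 * p2 0 * p4 0 - (p3 0)\<^sup>2))"
proof -
  define X where "X = - p3 0 / p4 0"
  define D where "D = 2 * p2 0 * p4 0 - (p3 0)\<^sup>2"
  have x_t0: "\<And>s. s \<in> K \<Longrightarrow> x s = x t0"
    using x_const_if_H2_const[OF p4 K] H t0 by metis
  have y: "C2 * (y s - y t0) = s - t0" if "s \<in> K" for s
    using y_affine_if_H_const[OF K H x_t0 t0 that] .
  then have "y t1 \<noteq> y t0"
    using t1 by force
  then have x: "\<And>s. s \<in> K \<Longrightarrow> x s = X"
    using x_value_if_H1_const[OF p4 K _ x_t0 t0 t1(1)] H x_t0 unfolding X_def by metis
  have C2: "C2 = D / (2 * p4 0)"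
    using H[OF t0] H2_eq[of t0] x[OF t0] t0 K(2) p4
    by (auto simp: X_def D_def field_simps power2_eq_square)
  have "C2 \<noteq> 0"
    using y[OF t1(1)] t1 by auto
  then have "D \<noteq> 0"
    using C2 by simp
  have "y t - y t0 = (t - t0) / C2"
    using y[OF t] \<open>C2 \<noteq> 0\<close> by (simp add: field_simps)
  then have "y t - y t0 = 2 * p4 0 * (t - t0) / D"
    using C2 by simp
  moreover have "z t - z t0 = 1/2 * X * (y t - y t0)" and "v t - v t0 = 1/12 * X\<^sup>2 * (y t - y t0)"
    using z_v_if_x_const[OF K x t0 t] by (simp_all add: algebra_simps)
  ultimately have "z t - z t0 = 1/2 * X * (2 * p4 0 * (t - t0) / D)"
    and "v t - v t0 = 1/12 * X\<^sup>2 * (2 * p4 0 * (t - t0) / D)"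
    by simp_all
  moreover have "1/2 * X * (2 * p4 0 * (t - t0) / D) = p3 0 * (t - t0) / ((p3 0)\<^sup>2 - 2 * p2 0 * p4 0)"
    and "1/12 * X\<^sup>2 * (2 * p4 0 * (t - t0) / D) = (p3 0)\<^sup>2 * (t - t0) / (6 * p4 0 * D)"
    using p4 \<open>D \<noteq> 0\<close> unfolding X_def D_def by (auto simp: field_simps power2_eq_square)
  ultimately show ?thesis
    using x[OF t] \<open>y t - y t0 = 2 * p4 0 * (t - t0) / D\<close> unfolding X_def D_def
    by (auto simp: algebra_simps)
qed

context
  fixes J :: "real set" and t0 t1 C1 C2 :: real
  assumes phi4: "p4 0 \<noteq> 0" and J: "is_interval J" "J \<subseteq> I"
    and t0_closure: "t0 \<in> closure J" and t0_closest: "\<forall>s\<in>closure J. \<bar>t0\<bar> \<le> \<bar>s\<bar>"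
    and t1: "t1 \<in> J" "t1 \<noteq> t0"
    and H_J: "\<And>t. t \<in> J \<Longrightarrow> H1 t = C1 \<and> H2 t = C2"
begin

lemma closest_point_mem: "t0 \<in> I"
  using closest_closure_point_mem_interval[OF interval J(2,1) t0_closure t0_closest] .

lemma H_const_on_insert_closest_point:
  assumes "t \<in> insert t0 J"
  shows "H1 t = C1 \<and> H2 t = C2"
proof -
  have ends: "min t0 t1 \<in> I" "max t0 t1 \<in> I"
    using closest_point_mem t1(1) J(2) by (auto simp: min_def max_def)
  have "H1 t0 = C1" "H2 t0 = C2"
    using continuous_constant_at_closure_point[OF J(1) t0_closure t1 continuous_on_Icc_H(1)[OF ends]]
      continuous_constant_at_closure_point[OF J(1) t0_closure t1 continuous_on_Icc_H(2)[OF ends]] H_J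
    by simp_all
  then show ?thesis
    using H_J assms by blast
qed

lemma trajectory_on_interval:
  assumes "t \<in> insert t0 J"
  shows "x t = - p3 0 / p4 0 \<and>
    y t = y t0 + 2 * p4 0 * (t - t0) / (2 * p2 0 * p4 0 - (p3 0)\<^sup>2) \<and>
    z t = z t0 + p3 0 * (t - t0) / ((p3 0)\<^sup>2 - 2 * p2 0 * p4 0) \<and>
    v t = v t0 + (p3 0)\<^sup>2 * (t - t0) / (6 * p4 0 * (2 * p2 0 * p4 0 - (p3 0)\<^sup>2))"
proof (rule trajectory_if_H_const[OF phi4 _ _ H_const_on_insert_closest_point _ _ t1(2) assms])
  show "is_interval (insert t0 J)"
    using is_interval_insert_closure[OF J(1) t0_closure] .
  show "insert t0 J \<subseteq> I"
    using J(2) closest_point_mem by blast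
qed (use t1 in auto)

lemma dilation_integral_at_closest_point:
  "p1 0 * (- p3 0 / p4 0) + p2 0 * y t0 + (2 * p3 0 + 1/2 * p4 0 * (- p3 0 / p4 0)) * z t0
    + 3 * p4 0 * v t0 = t0"
proof -
  have "x t0 = - p3 0 / p4 0"
    using trajectory_on_interval by blast
  then show ?thesis
    using dilation_integral[OF closest_point_mem] by (simp add: algebra_simps)
qed

lemma trajectory_on_interval_phi3_zero:
  assumes p3: "p3 0 = 0" and t: "t \<in> J"
  shows "x t = 0 \<and> y t = y t0 + (t - t0) / p2 0 \<and> z t = z t0 \<and>
    v t = v t0 \<and> v t0 = (t0 - p2 0 * y t0) / (3 * p4 0)"
proof -
  have "x t = 0" "y t = y t0 + 2 * p4 0 * (t - t0) / (2 * p2 0 * p4 0)" "z t = z t0" "v t = v t0"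
    using trajectory_on_interval[of t] p3 t by auto
  moreover have "2 * p4 0 * (t - t0) / (2 * p2 0 * p4 0) = (t - t0) / p2 0"
    using phi4 by simp
  moreover have "v t0 = (t0 - p2 0 * y t0) / (3 * p4 0)"
    using dilation_integral_at_closest_point p3 phi4 by (simp add: field_simps)
  ultimately show ?thesis
    by simp
qed

end

end

theorem lemma1:
  fixes F :: "real \<times> real \<Rightarrow> real"
    and I J :: "real set"
    and u :: "real \<Rightarrow> real \<times> real"
    and x y z v p1 p2 p3 p4 \<theta> :: "real \<Rightarrow> real"
    and t0 :: real
  assumes norm: "is_norm2 F"
    and ext: "normal_extremal F I u x y z v p1 p2 p3 p4"
    and phi4: "p4 0 \<noteq> 0"
    and theta_cont: "continuous_on I \<theta>"
    and theta_h: "\<forall>t\<in>I. (h1 x y z p1 p3 p4 t, h2 x p2 p3 p4 t)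
                         = (polar_r F (\<theta> t) * cos (\<theta> t), polar_r F (\<theta> t) * sin (\<theta> t))"
    and J_sub: "J \<subseteq> I"
    and J_int: "is_interval J"
    and J_nondeg: "\<exists>a\<in>J. \<exists>b\<in>J. a \<noteq> b"
    and theta_const: "\<exists>c. \<forall>t\<in>J. \<theta> t = c"
    and t0_closure: "t0 \<in> closure J"
    and t0_closest: "\<forall>s\<in>closure J. \<bar>t0\<bar> \<le> \<bar>s\<bar>"
  shows "(\<forall>t\<in>J.
            x t = - p3 0 / p4 0 \<and>
            y t = y t0 + 2 * p4 0 * (t - t0) / (2 * p2 0 * p4 0 - (p3 0)\<^sup>2) \<and>
            z t = z t0 + p3 0 * (t - t0) / ((p3 0)\<^sup>2 - 2 * p2 0 * p4 0) \<and>
            v t = v t0 + (p3 0)\<^sup>2 * (t - t0) / (6 * p4 0 * (2 * p2 0 * p4 0 - (p3 0)\<^sup>2)))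
       \<and> p1 0 * (- p3 0 / p4 0) + p2 0 * y t0 + (2 * p3 0 + 1/2 * p4 0 * (- p3 0 / p4 0)) * z t0
           + 3 * p4 0 * v t0 = t0
       \<and> (p3 0 = 0 \<longrightarrow>
            (\<forall>t\<in>J. x t = 0 \<and> y t = y t0 + (t - t0) / p2 0 \<and> z t = z t0 \<and>
                    v t = v t0 \<and> v t0 = (t0 - p2 0 * y t0) / (3 * p4 0)))"
proof -
  interpret engel_normal_extremal F I u x y z v p1 p2 p3 p4
    using ext by unfold_locales
  obtain c where c: "\<forall>t\<in>J. \<theta> t = c"
    using theta_const by blast
  obtain t1 where t1: "t1 \<in> J" "t1 \<noteq> t0"
    using J_nondeg by metis
  have H_J: "H1 t = polar_r F c * cos c \<and> H2 t = polar_r F c * sin c" if "t \<in> J" for t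
    using theta_h J_sub c that by fastforce
  note hyps = phi4 J_int J_sub t0_closure t0_closest t1 H_J
  show ?thesis
    using trajectory_on_interval[OF hyps] dilation_integral_at_closest_point[OF hyps]
      trajectory_on_interval_phi3_zero[OF hyps]
    by blast
qed

end
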